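(* Let $(G,c)$ be a W-state graph and let $G_m=(V(G),E_m(G))$ be the spanning subgraph consisting of all monochromatic edges. Then $G_m$ is the disjoint union of exactly two connected components, each of which is factor-critical.
   Context: Graphs may have parallel edges but no loops. A half-edge $2$-colouring $c$ of $G$ assigns to each pair $(e,w)$ with $w$ an endpoint of edge $e$ a colour in $\{0,1\}$ (0 = blue, 1 = red). An edge $e=uv$ is bichromatic if $c(e,u)\neq c(e,v)$ and monochromatic otherwise; $E_m(G)$ is the set of monochromatic edges; standing convention: monochromatic edges are blue at both ends. A graph is matching-covered if every edge lies in some perfect matching. A W-state graph is a half-edge $2$-coloured matching-covered graph $(G,c)$ in which every perfect matching contains exactly one bichromatic edge, and every vertex $v$ is incident with an edge $e$ with $c(e,v)=1$. A graph $F$ is factor-critical if $F-u$ has a perfect matching for every vertex $u$. *)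

theory Defs
  imports Main
begin

text \<open>A finite multigraph without loops: vertex set V, edge set E (edges are abstract
  objects, so parallel edges are allowed), and ends e = set of the two endpoints of e.\<close>
definition multigraph :: "'v set \<Rightarrow> 'e set \<Rightarrow> ('e \<Rightarrow> 'v set) \<Rightarrow> bool" where
  "multigraph V E ends \<longleftrightarrow> finite V \<and> finite E \<and>
     (\<forall>e\<in>E. ends e \<subseteq> V \<and> card (ends e) = 2)"

definition perfect_matching :: "'v set \<Rightarrow> 'e set \<Rightarrow> ('e \<Rightarrow> 'v set) \<Rightarrow> 'e set \<Rightarrow> bool" where
  "perfect_matching V E ends M \<longleftrightarrow> M \<subseteq> E \<and> (\<forall>v\<in>V. \<exists>!e. e \<in> M \<and> v \<in> ends e)"

definition matching_covered :: "'v set \<Rightarrow> 'e set \<Rightarrow> ('e \<Rightarrow> 'v set) \<Rightarrow> bool" where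
  "matching_covered V E ends \<longleftrightarrow> (\<forall>e\<in>E. \<exists>M. perfect_matching V E ends M \<and> e \<in> M)"

text \<open>Half-edge 2-colouring: c e v for v an endpoint of e; False = 0 = blue, True = 1 = red.\<close>
definition bichromatic :: "('e \<Rightarrow> 'v set) \<Rightarrow> ('e \<Rightarrow> 'v \<Rightarrow> bool) \<Rightarrow> 'e \<Rightarrow> bool" where
  "bichromatic ends c e \<longleftrightarrow> (\<exists>u\<in>ends e. \<exists>v\<in>ends e. c e u \<noteq> c e v)"

definition mono_edges :: "'e set \<Rightarrow> ('e \<Rightarrow> 'v set) \<Rightarrow> ('e \<Rightarrow> 'v \<Rightarrow> bool) \<Rightarrow> 'e set" where
  "mono_edges E ends c = {e \<in> E. \<not> bichromatic ends c e}"

definition W_state :: "'v set \<Rightarrow> 'e set \<Rightarrow> ('e \<Rightarrow> 'v set) \<Rightarrow> ('e \<Rightarrow> 'v \<Rightarrow> bool) \<Rightarrow> bool" where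
  "W_state V E ends c \<longleftrightarrow> multigraph V E ends \<and> matching_covered V E ends \<and>
     (\<forall>M. perfect_matching V E ends M \<longrightarrow> card {e \<in> M. bichromatic ends c e} = 1) \<and>
     (\<forall>v\<in>V. \<exists>e\<in>E. v \<in> ends e \<and> c e v)"

definition adj :: "'e set \<Rightarrow> ('e \<Rightarrow> 'v set) \<Rightarrow> 'v \<Rightarrow> 'v \<Rightarrow> bool" where
  "adj E ends u v \<longleftrightarrow> (\<exists>e\<in>E. ends e = {u, v})"

definition components :: "'v set \<Rightarrow> 'e set \<Rightarrow> ('e \<Rightarrow> 'v set) \<Rightarrow> 'v set set" where
  "components V E ends = {{v \<in> V. (adj E ends)\<^sup>*\<^sup>* u v} | u. u \<in> V}"

definition factor_critical :: "'v set \<Rightarrow> 'e set \<Rightarrow> ('e \<Rightarrow> 'v set) \<Rightarrow> bool" where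
  "factor_critical V E ends \<longleftrightarrow> (\<forall>u\<in>V. \<exists>M.
     perfect_matching (V - {u}) {e \<in> E. ends e \<subseteq> V - {u}} ends M)"

end

theory Submission
  imports Defs
begin

text \<open>Let F be the set of monochromatic edges. Deleting the unique bichromatic edge f from a
  perfect matching of G leaves a matching of F that misses exactly the two ends of f. Every vertex
  carries a red half-edge, which lies on a bichromatic edge since monochromatic edges are blue, so
  every vertex is missed by such a near-perfect matching of F, whereas F has no perfect matching.
  The alternating-path argument behind Gallai's lemma shows that the two vertices missed by a
  near-perfect matching of F lie in different components of F. Restricting a near-perfect matching
  that misses z to the component C of z gives a perfect matching of C - z, so every component is
  factor-critical and hence odd. A component containing neither vertex missed by a fixed
  near-perfect matching would be perfectly matched, hence even; so there are exactly two
  components.\<close>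

definition matching :: "'e set \<Rightarrow> ('e \<Rightarrow> 'v set) \<Rightarrow> 'e set \<Rightarrow> bool" where
  "matching F ends M \<longleftrightarrow> M \<subseteq> F \<and> (\<forall>e\<in>M. \<forall>e'\<in>M. e \<noteq> e' \<longrightarrow> ends e \<inter> ends e' = {})"

definition covered :: "('e \<Rightarrow> 'v set) \<Rightarrow> 'e set \<Rightarrow> 'v set" where
  "covered ends M = \<Union>(ends ` M)"

lemma covered_insert [simp]: "covered ends (insert e M) = ends e \<union> covered ends M"
  by (simp add: covered_def)

lemma matching_subset: "matching F ends M \<Longrightarrow> M' \<subseteq> M \<Longrightarrow> matching F ends M'"
  unfolding matching_def by blast

lemma matching_insert:
  "matching F ends M \<Longrightarrow> e \<in> F \<Longrightarrow> ends e \<inter> covered ends M = {} \<Longrightarrow> matching F ends (insert e M)"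
  unfolding matching_def covered_def by blast

lemma matching_edge_unique:
  "matching F ends M \<Longrightarrow> e \<in> M \<Longrightarrow> e' \<in> M \<Longrightarrow> x \<in> ends e \<Longrightarrow> x \<in> ends e' \<Longrightarrow> e = e'"
  unfolding matching_def by blast

lemma covered_Diff_edge:
  "matching F ends M \<Longrightarrow> e \<in> M \<Longrightarrow> covered ends (M - {e}) = covered ends M - ends e"
  unfolding matching_def covered_def by blast

lemma card_covered:
  assumes "matching F ends M" "finite M" "\<forall>e\<in>F. card (ends e) = 2"
  shows "card (covered ends M) = 2 * card M"
proof -
  have "M \<subseteq> F" using assms(1) by (simp add: matching_def)
  then have "\<forall>e\<in>M. finite (ends e)"
    using assms(3) by (metis card.infinite subsetD zero_neq_numeral)
  then have "card (covered ends M) = (\<Sum>e\<in>M. card (ends e))"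
    unfolding covered_def using assms(1,2) by (intro card_UN_disjoint) (auto simp: matching_def)
  also have "\<dots> = (\<Sum>e\<in>M. 2)"
    using \<open>M \<subseteq> F\<close> assms(3) by (intro sum.cong) auto
  finally show ?thesis by simp
qed

lemma perfect_matching_iff_covered:
  assumes "\<forall>e\<in>F. ends e \<subseteq> V"
  shows "perfect_matching V F ends M \<longleftrightarrow> matching F ends M \<and> covered ends M = V"
  using assms unfolding perfect_matching_def matching_def covered_def by blast

lemma card_2_other: "card A = 2 \<Longrightarrow> w \<in> A \<Longrightarrow> \<exists>a. A = {a, w} \<and> a \<noteq> w"
  by (auto simp: card_2_iff)

lemma matching_swap_edge:
  assumes M: "matching F ends M" and "e \<in> M" "ends e = {a, w}" "a \<noteq> w"
    and "g \<in> F" "ends g = {a, b}" "b \<notin> covered ends M"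
  shows "matching F ends (insert g (M - {e}))"
    and "covered ends (insert g (M - {e})) = insert b (covered ends M - {w})"
proof -
  have "covered ends (M - {e}) = covered ends M - {a, w}"
    using covered_Diff_edge[OF M \<open>e \<in> M\<close>] \<open>ends e = {a, w}\<close> by simp
  then show "matching F ends (insert g (M - {e}))"
    using assms by (intro matching_insert matching_subset[OF M]) auto
  show "covered ends (insert g (M - {e})) = insert b (covered ends M - {w})"
    using \<open>covered ends (M - {e}) = _\<close> assms by (auto simp: covered_def)
qed

text \<open>The two possible ends of the alternating path that starts at w with an edge of M: a
  vertex x missed by N, so that N can be augmented to cover w and x, or a vertex x missed by M, so
  that switching M along the path (which avoids the edges of M \<inter> N) moves the hole of M from x
  to w.\<close>
definition alternating_exchange :: "'e set \<Rightarrow> ('e \<Rightarrow> 'v set) \<Rightarrow> 'e set \<Rightarrow> 'e set \<Rightarrow> 'v \<Rightarrow> bool" where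
  "alternating_exchange F ends M N w \<longleftrightarrow>
    (\<exists>N' x. matching F ends N' \<and> x \<notin> covered ends N \<and> x \<noteq> w \<and>
        covered ends N' = insert w (insert x (covered ends N))) \<or>
    (\<exists>M' x. matching F ends M' \<and> M \<inter> N \<subseteq> M' \<and> x \<notin> covered ends M \<and>
        covered ends M' = insert x (covered ends M - {w}))"

lemma alternating_exchange_swap:
  assumes M: "matching F ends M" and e: "e \<in> M" "ends e = {a, w}" "a \<noteq> w" "e \<notin> N"
    and g: "g \<in> F" "g \<in> N" "g \<notin> M" "ends g = {a, b}" and b: "b \<noteq> w" "b \<in> covered ends M"
    and cov_swap: "covered ends (insert e (N - {g})) = insert w (covered ends N - {b})"
    and "alternating_exchange F ends M (insert e (N - {g})) b"
  shows "alternating_exchange F ends M N w"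
  using \<open>alternating_exchange F ends M (insert e (N - {g})) b\<close>[unfolded alternating_exchange_def]
proof (elim disjE exE conjE)
  fix N' x
  assume "matching F ends N'" "x \<notin> covered ends (insert e (N - {g}))" "x \<noteq> b"
    and "covered ends N' = insert b (insert x (covered ends (insert e (N - {g}))))"
  then show ?thesis using g b cov_swap unfolding alternating_exchange_def
    by (intro disjI1 exI[of _ N'] exI[of _ x]) (auto simp: covered_def)
next
  fix M' x
  assume M': "matching F ends M'" "M \<inter> insert e (N - {g}) \<subseteq> M'" "x \<notin> covered ends M"
    and cov: "covered ends M' = insert x (covered ends M - {b})"
  have "e \<in> M'" using e(1) M'(2) by auto
  moreover have "b \<notin> covered ends M'" using cov M'(3) b(2) by auto
  ultimately have "matching F ends (insert g (M' - {e}))"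
    and "covered ends (insert g (M' - {e})) = insert b (covered ends M' - {w})"
    using matching_swap_edge[OF M'(1) _ e(2,3) g(1,4)] by blast+
  moreover have "w \<in> covered ends M" using e(1,2) by (auto simp: covered_def)
  ultimately show ?thesis
    using cov M'(2,3) e(4) g b unfolding alternating_exchange_def
    by (intro disjI2 exI[of _ "insert g (M' - {e})"] exI[of _ x]) auto
qed

text \<open>The alternating path is traversed one M-edge and one N-edge at a time, each time
  exchanging the two edges inside N.\<close>
lemma alternating_path_exchange:
  assumes two: "\<forall>e\<in>F. card (ends e) = 2" and "finite M" and M: "matching F ends M"
  shows "matching F ends N \<Longrightarrow> w \<in> covered ends M \<Longrightarrow> w \<notin> covered ends N \<Longrightarrow>
    alternating_exchange F ends M N w"
proof (induction "card (M - N)" arbitrary: N w rule: less_induct)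
  case less
  note N = less.prems(1) and wM = less.prems(2) and wN = less.prems(3)
  obtain e where eM: "e \<in> M" and "w \<in> ends e" using wM by (auto simp: covered_def)
  moreover have eF: "e \<in> F" using M eM by (auto simp: matching_def)
  ultimately obtain a where e: "ends e = {a, w}" "a \<noteq> w" using two card_2_other by metis
  have eN: "e \<notin> N" using wN \<open>w \<in> ends e\<close> by (auto simp: covered_def)
  show ?case
  proof (cases "a \<in> covered ends N")
    case False
    then have "matching F ends (insert e N)" using matching_insert[OF N eF] e wN by auto
    then show ?thesis using False e unfolding alternating_exchange_def
      by (intro disjI1 exI[of _ "insert e N"] exI[of _ a]) auto
  next
    case True
    then obtain g where gN: "g \<in> N" and "a \<in> ends g" by (auto simp: covered_def)
    moreover have gF: "g \<in> F" using N gN by (auto simp: matching_def)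
    ultimately obtain b where g: "ends g = {b, a}" "b \<noteq> a" using two card_2_other by metis
    then have g': "ends g = {a, b}" by auto
    have "b \<noteq> w" using wN gN g by (auto simp: covered_def)
    have gM: "g \<notin> M" using matching_edge_unique[OF M eM, of g a] e g eN gN by auto
    show ?thesis
    proof (cases "b \<in> covered ends M")
      case False
      then show ?thesis using matching_swap_edge[OF M eM e gF g' False] eN
        unfolding alternating_exchange_def
        by (intro disjI2 exI[of _ "insert g (M - {e})"] exI[of _ b]) auto
    next
      case bM: True
      let ?N1 = "insert e (N - {g})"
      have N1: "matching F ends ?N1" "covered ends ?N1 = insert w (covered ends N - {b})"
        using matching_swap_edge[OF N gN g' g(2)[symmetric] eF e(1) wN] by auto
      have "M - ?N1 = (M - N) - {e}" using gM by auto
      then have "card (M - ?N1) < card (M - N)"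
        using card_Diff1_less[of "M - N" e] eM eN \<open>finite M\<close> by simp
      moreover have "b \<notin> covered ends ?N1" using N1(2) \<open>b \<noteq> w\<close> by auto
      ultimately have "alternating_exchange F ends M ?N1 b" using less.hyps N1(1) bM by blast
      then show ?thesis
        using alternating_exchange_swap[OF M eM e eN gF gN gM g' \<open>b \<noteq> w\<close> bM N1(2)] by blast
    qed
  qed
qed

definition component :: "'v set \<Rightarrow> 'e set \<Rightarrow> ('e \<Rightarrow> 'v set) \<Rightarrow> 'v \<Rightarrow> 'v set" where
  "component V F ends u = {v \<in> V. (adj F ends)\<^sup>*\<^sup>* u v}"

lemma components_eq_image_component: "components V F ends = component V F ends ` V"
  unfolding components_def component_def by auto

lemma factor_critical_odd_card:
  assumes "factor_critical C F ends" "finite C" "C \<noteq> {}" "finite F" "\<forall>e\<in>F. card (ends e) = 2"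
  shows "odd (card C)"
proof -
  obtain z where "z \<in> C" using assms(3) by blast
  then obtain M where "perfect_matching (C - {z}) {e \<in> F. ends e \<subseteq> C - {z}} ends M"
    using assms(1) unfolding factor_critical_def by blast
  then have M: "matching {e \<in> F. ends e \<subseteq> C - {z}} ends M" "covered ends M = C - {z}"
    by (simp_all add: perfect_matching_iff_covered)
  moreover have "finite M"
    using M(1) assms(4) by (auto simp: matching_def intro: finite_subset)
  ultimately have "card (C - {z}) = 2 * card M"
    using card_covered[OF M(1)] assms(5) by simp
  then show ?thesis using card.remove[OF assms(2) \<open>z \<in> C\<close>] by simp
qed

locale near_perfect_graph =
  fixes V :: "'v set" and F :: "'e set" and ends :: "'e \<Rightarrow> 'v set"
  assumes graph: "multigraph V F ends"
    and no_perfect_matching: "matching F ends M \<Longrightarrow> covered ends M \<noteq> V"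
    and near_perfect_matching:
      "v \<in> V \<Longrightarrow> \<exists>N x. matching F ends N \<and> x \<noteq> v \<and> V - covered ends N = {v, x}"
begin

lemma finite_vertices: "finite V" and finite_edges: "finite F"
  and edge_ends: "\<forall>e\<in>F. ends e \<subseteq> V" and card_edge_ends: "\<forall>e\<in>F. card (ends e) = 2"
  using graph by (auto simp: multigraph_def)

lemma covered_subset: "matching F ends M \<Longrightarrow> covered ends M \<subseteq> V"
  using edge_ends by (auto simp: matching_def covered_def)

lemma finite_matching: "matching F ends M \<Longrightarrow> finite M"
  using finite_edges by (auto simp: matching_def intro: finite_subset)

lemma no_matching_misses_edge:
  assumes "matching F ends M" "e \<in> F" "V - covered ends M = ends e"
  shows False
proof -
  have "matching F ends (insert e M)" using assms by (intro matching_insert) auto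
  moreover have "covered ends (insert e M) = V"
    using assms covered_subset[OF assms(1)] by auto
  ultimately show False using no_perfect_matching by blast
qed

lemma move_uncovered_vertex:
  assumes M: "matching F ends M" and uncov: "V - covered ends M = {u, v}" "u \<noteq> v"
    and wM: "w \<in> covered ends M"
  shows "\<exists>M'. matching F ends M' \<and> (V - covered ends M' = {w, u} \<or> V - covered ends M' = {w, v})"
proof -
  have "w \<in> V" using covered_subset[OF M] wM by blast
  then obtain N x where N: "matching F ends N" "x \<noteq> w" "V - covered ends N = {w, x}"
    using near_perfect_matching by blast
  have "w \<notin> covered ends N" using N(3) by blast
  from alternating_path_exchange[OF card_edge_ends finite_matching[OF M] M N(1) wM this]
  show ?thesis unfolding alternating_exchange_def
  proof (elim disjE exE conjE)
    fix N' y
    assume N': "matching F ends N'" "y \<notin> covered ends N" "y \<noteq> w"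
      and cov: "covered ends N' = insert w (insert y (covered ends N))"
    then have "y = x" using covered_subset[OF N'(1)] N(3) by blast
    then have "covered ends N' = V" using cov N(3) covered_subset[OF N(1)] by blast
    then show ?thesis using no_perfect_matching N'(1) by blast
  next
    fix M' y
    assume M': "matching F ends M'" "y \<notin> covered ends M"
      and cov: "covered ends M' = insert y (covered ends M - {w})"
    then have "y \<in> V" "y \<noteq> w" using covered_subset[OF M'(1)] wM by auto
    then have "V - covered ends M' = insert w ({u, v} - {y})"
      using cov uncov(1) covered_subset[OF M] wM by auto
    moreover have "y = u \<or> y = v" using \<open>y \<in> V\<close> M'(2) uncov(1) by blast
    ultimately show ?thesis using M'(1) uncov(2) by auto
  qed
qed

text \<open>Induction along a path from u to v: moving the hole at u or v to the next vertex w of the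
  path either leaves the holes w and v, joined by a shorter path, or the holes u and w, joined by
  an edge.\<close>
lemma uncovered_pair_not_connected:
  assumes "(adj F ends)\<^sup>*\<^sup>* u v" "matching F ends M" "V - covered ends M = {u, v}" "u \<noteq> v"
  shows False
  using assms
proof (induction arbitrary: M rule: converse_rtranclp_induct)
  case base
  then show ?case by simp
next
  case (step u w)
  obtain e where eF: "e \<in> F" and e: "ends e = {u, w}"
    using step.hyps(1) by (auto simp: adj_def)
  then have "w \<in> V" "card {u, w} = 2" using edge_ends card_edge_ends by auto
  then have "w \<noteq> u" by (cases "w = u") auto
  show False
  proof (cases "w = v")
    case True
    then show False using no_matching_misses_edge[OF step.prems(1) eF] e step.prems(2) by simp
  next
    case False
    then have "w \<in> covered ends M" using \<open>w \<in> V\<close> \<open>w \<noteq> u\<close> step.prems(2) by blast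
    then obtain M' where M': "matching F ends M'"
      and "V - covered ends M' = {w, u} \<or> V - covered ends M' = {w, v}"
      using move_uncovered_vertex step.prems by blast
    then show False
    proof (elim disjE)
      assume "V - covered ends M' = {w, u}"
      then show False using no_matching_misses_edge[OF M' eF] e by (simp add: insert_commute)
    next
      assume "V - covered ends M' = {w, v}"
      then show False using step.IH[OF M'] False by blast
    qed
  qed
qed

abbreviation component_of :: "'v \<Rightarrow> 'v set" where
  "component_of \<equiv> component V F ends"

lemma equivp_connected: "equivp (adj F ends)\<^sup>*\<^sup>*"
  by (rule equivp_rtranclp) (auto simp: symp_def adj_def insert_commute)

lemma component_eq: "v \<in> component_of u \<Longrightarrow> component_of v = component_of u"
  using equivp_connected unfolding component_def equivp_def by auto

lemma component_subset: "component_of u \<subseteq> V"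
  by (auto simp: component_def)

lemma self_in_component: "u \<in> V \<Longrightarrow> u \<in> component_of u"
  by (simp add: component_def)

lemma covered_restrict_component:
  assumes "matching F ends N"
  shows "covered ends {e \<in> N. ends e \<subseteq> component_of u} = component_of u \<inter> covered ends N"
proof -
  have "ends e \<subseteq> component_of u" if e: "e \<in> N" and x: "x \<in> ends e" "x \<in> component_of u" for e x
  proof -
    have "e \<in> F" using assms e by (auto simp: matching_def)
    then obtain y where "ends e = {y, x}" using card_edge_ends card_2_other x(1) by metis
    with \<open>e \<in> F\<close> have "y \<in> V" "(adj F ends) x y"
      using edge_ends by (auto simp: adj_def insert_commute)
    with \<open>x \<in> component_of u\<close> have "y \<in> component_of u"
      by (auto simp: component_def intro: rtranclp.rtrancl_into_rtrancl)
    then show ?thesis using \<open>ends e = {y, x}\<close> x(2) by auto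
  qed
  then show ?thesis by (auto simp: covered_def)
qed

lemma factor_critical_component:
  "factor_critical (component_of u) {e \<in> F. ends e \<subseteq> component_of u} ends"
  unfolding factor_critical_def
proof
  fix z assume "z \<in> component_of u"
  then have "z \<in> V" using component_subset by blast
  then obtain N x where N: "matching F ends N" "x \<noteq> z" "V - covered ends N = {z, x}"
    using near_perfect_matching by blast
  have "x \<notin> component_of u"
  proof
    assume "x \<in> component_of u"
    then have "x \<in> component_of z" using component_eq[OF \<open>z \<in> component_of u\<close>] by simp
    then have "(adj F ends)\<^sup>*\<^sup>* z x" by (simp add: component_def)
    then show False using uncovered_pair_not_connected N by blast
  qed
  define M where "M = {e \<in> N. ends e \<subseteq> component_of u}"
  have "covered ends M = component_of u - {z}"
    using covered_restrict_component[OF N(1)] N(3) \<open>x \<notin> component_of u\<close> component_subset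
    unfolding M_def by blast
  moreover have
    "matching {e \<in> {e \<in> F. ends e \<subseteq> component_of u}. ends e \<subseteq> component_of u - {z}} ends M"
    using N(1,3) unfolding M_def matching_def covered_def by auto
  ultimately show "\<exists>M. perfect_matching (component_of u - {z})
      {e \<in> {e \<in> F. ends e \<subseteq> component_of u}. ends e \<subseteq> component_of u - {z}} ends M"
    by (auto simp: perfect_matching_iff_covered)
qed

lemma odd_card_component: "u \<in> V \<Longrightarrow> odd (card (component_of u))"
  using factor_critical_odd_card[OF factor_critical_component] self_in_component
    finite_subset[OF component_subset finite_vertices] finite_edges card_edge_ends
  by auto

lemma card_components: "card (components V F ends) = 2"
proof -
  have "V \<noteq> {}" using no_perfect_matching[of "{}"] by (simp add: matching_def covered_def)
  then obtain x where "x \<in> V" by blast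
  then obtain N y where N: "matching F ends N" "y \<noteq> x" "V - covered ends N = {x, y}"
    using near_perfect_matching by blast
  then have "y \<in> V" by blast
  have component_cases: "component_of u = component_of x \<or> component_of u = component_of y"
    if "u \<in> V" for u
  proof (rule ccontr)
    assume "\<not> ?thesis"
    then have "x \<notin> component_of u" "y \<notin> component_of u"
      using component_eq[of x u] component_eq[of y u] by auto
    then have "component_of u \<subseteq> covered ends N" using component_subset[of u] N(3) by auto
    then have "covered ends {e \<in> N. ends e \<subseteq> component_of u} = component_of u"
      using covered_restrict_component[OF N(1), of u] by blast
    moreover have M: "matching F ends {e \<in> N. ends e \<subseteq> component_of u}"
      using N(1) by (rule matching_subset) auto
    ultimately have "even (card (component_of u))"
      using card_covered[OF M finite_matching[OF M] card_edge_ends] by simp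
    then show False using odd_card_component[OF that] by blast
  qed
  have "component_of x \<noteq> component_of y"
  proof
    assume "component_of x = component_of y"
    then have "y \<in> component_of x" using self_in_component[OF \<open>y \<in> V\<close>] by simp
    then have "(adj F ends)\<^sup>*\<^sup>* x y" by (simp add: component_def)
    then show False using uncovered_pair_not_connected N by blast
  qed
  have "component_of ` V = {component_of x, component_of y}"
    using component_cases \<open>x \<in> V\<close> \<open>y \<in> V\<close> by blast
  then show ?thesis
    using \<open>component_of x \<noteq> component_of y\<close> by (simp add: components_eq_image_component)
qed

end

lemma multigraph_mono_edges: "multigraph V E ends \<Longrightarrow> multigraph V (mono_edges E ends c) ends"
  unfolding multigraph_def mono_edges_def by (auto intro: finite_subset)

lemma W_state_no_perfect_mono_matching:
  assumes W: "W_state V E ends c" and M: "matching (mono_edges E ends c) ends M"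
  shows "covered ends M \<noteq> V"
proof
  assume "covered ends M = V"
  moreover have "matching E ends M" using M unfolding matching_def mono_edges_def by blast
  ultimately have "perfect_matching V E ends M"
    using W by (simp add: perfect_matching_iff_covered W_state_def multigraph_def)
  then have "card {e \<in> M. bichromatic ends c e} = 1" using W by (simp add: W_state_def)
  moreover have "{e \<in> M. bichromatic ends c e} = {}"
    using M by (auto simp: matching_def mono_edges_def)
  ultimately show False by simp
qed

lemma W_state_near_perfect_mono_matching:
  assumes W: "W_state V E ends c" and blue: "\<forall>e\<in>mono_edges E ends c. \<forall>v\<in>ends e. \<not> c e v"
    and "v \<in> V"
  shows "\<exists>N x. matching (mono_edges E ends c) ends N \<and> x \<noteq> v \<and> V - covered ends N = {v, x}"
proof -
  have G: "\<forall>e\<in>E. ends e \<subseteq> V \<and> card (ends e) = 2"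
    using W by (simp add: W_state_def multigraph_def)
  obtain f where f: "f \<in> E" "v \<in> ends f" "c f v"
    using W \<open>v \<in> V\<close> by (auto simp: W_state_def)
  then have "bichromatic ends c f" using blue by (auto simp: mono_edges_def)
  obtain P where P: "perfect_matching V E ends P" "f \<in> P"
    using W f(1) by (auto simp: W_state_def matching_covered_def)
  then have "card {e \<in> P. bichromatic ends c e} = 1" using W by (simp add: W_state_def)
  then obtain g where "{e \<in> P. bichromatic ends c e} = {g}" by (rule card_1_singletonE)
  then have bichromatic_P: "{e \<in> P. bichromatic ends c e} = {f}"
    using P(2) \<open>bichromatic ends c f\<close> by auto
  have P': "matching E ends P" "covered ends P = V"
    using P(1) G by (simp_all add: perfect_matching_iff_covered)
  have "matching (mono_edges E ends c) ends (P - {f})"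
    using P'(1) bichromatic_P unfolding matching_def mono_edges_def by blast
  moreover have "V - covered ends (P - {f}) = ends f"
    using covered_Diff_edge[OF P'(1) P(2)] P'(2) G f(1) by auto
  moreover obtain x where "ends f = {x, v}" "x \<noteq> v" using G f card_2_other by metis
  ultimately show ?thesis by blast
qed

theorem mainTheorem8:
  fixes V :: "'v set" and E :: "'e set" and ends :: "'e \<Rightarrow> 'v set"
    and c :: "'e \<Rightarrow> 'v \<Rightarrow> bool"
  assumes "W_state V E ends c"
    and "\<forall>e\<in>mono_edges E ends c. \<forall>v\<in>ends e. \<not> c e v"
  shows "card (components V (mono_edges E ends c) ends) = 2 \<and>
    (\<forall>C\<in>components V (mono_edges E ends c) ends.
       factor_critical C {e \<in> mono_edges E ends c. ends e \<subseteq> C} ends)"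
proof -
  interpret near_perfect_graph V "mono_edges E ends c" ends
  proof
    show "multigraph V (mono_edges E ends c) ends"
      using assms(1) by (simp add: W_state_def multigraph_mono_edges)
    show "covered ends M \<noteq> V" if "matching (mono_edges E ends c) ends M" for M
      using W_state_no_perfect_mono_matching[OF assms(1) that] .
    show "\<exists>N x. matching (mono_edges E ends c) ends N \<and> x \<noteq> v \<and> V - covered ends N = {v, x}"
      if "v \<in> V" for v
      using W_state_near_perfect_mono_matching[OF assms that] .
  qed
  show ?thesis
    using card_components factor_critical_component
    by (auto simp: components_eq_image_component)
qed

end
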